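(* Let $q=2$ and let $n,d$ be integers with $d\ge1$ and $n\ge 2d+1$. For all $0\le i\le d-1$ and $1\le j\le d$, $$|G_j(i+1)|<|G_j(i)|.$$
   Context: With $q=2$, for integers $m\ge 0$ and $l$, ${m\brack l}=\prod_{t=1}^{l}\frac{q^{m-t+1}-1}{q^t-1}$ for $l\ge0$ and $0$ for $l<0$. For $0\le i,j\le d$, $$G_j(i)=\sum_{h=\max\{0,i-j\}}^{\min\{i,d-j\}}(-1)^{i-h}q^{j(j-i+h)+\binom{i-h}{2}}{i\brack h}{d-h\brack j}{n-d-i+h\brack n-d-j};$$ these are the eigenvalues of the Grassmann graph $G_q(n,d,j)$ (vertices: $d$-subspaces of $\mathbb F_q^n$, adjacent iff intersection has dimension $d-j$). *)

theory Defs
  imports "HOL-Analysis.Analysis"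
begin

text \<open>Gaussian binomial coefficient with q = 2: for m \<ge> 0 and integer l,
  [m, l] = prod_{t=1}^{l} (q^(m-t+1)-1)/(q^t-1) for l \<ge> 0, and 0 for l < 0.
  The top argument m is an integer assumed nonnegative where used.\<close>
definition qbin :: "int \<Rightarrow> int \<Rightarrow> real" where
  "qbin m l = (if l < 0 then 0 else
     (\<Prod>t\<in>{1..nat l}. ((2::real) powi (m - int t + 1) - 1) / ((2::real) ^ t - 1)))"

text \<open>Eigenvalue G_j(i) of the Grassmann graph G_q(n,d,j), q = 2.\<close>
definition G :: "int \<Rightarrow> int \<Rightarrow> int \<Rightarrow> int \<Rightarrow> real" where
  "G n d j i = (\<Sum>h\<in>{max 0 (i - j) .. min i (d - j)}.
     (-1) ^ nat (i - h) * (2::real) powi (j * (j - i + h) + (i - h) * (i - h - 1) div 2)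
     * qbin i h * qbin (d - h) j * qbin (n - d - i + h) (n - d - j))"

end

theory Submission
  imports Defs
begin

(* G_j(i) is an alternating sum over h of positive terms T_h, and for n >= 2d+1 these terms are
   nondecreasing in h. Hence |G_j(i)| lies between T_top - T_(top-1) and T_top, where top is the
   largest summation index. By the one-step recurrences of the Gaussian binomials, the ratio of
   two neighbouring terms is a quotient of products of powers of 2 and factors 2^k - 1, so showing
   that the largest term of G_j(i+1) is below T_top - T_(top-1) reduces to a polynomial
   inequality in powers of 2. There are two cases: top = i when i + j < d, and top = d - j
   otherwise. *)

definition qfact :: "nat \<Rightarrow> real" where
  "qfact m = (\<Prod>t\<in>{1..m}. 2 ^ t - 1)"

(* Agrees with qbin only for L <= M (see qbin_of_nat): for L > M the truncated subtraction
   M - L yields a nonzero junk value. *)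
definition qbinom :: "nat \<Rightarrow> nat \<Rightarrow> real" where
  "qbinom M L = qfact M / (qfact L * qfact (M - L))"

lemma two_power_Suc_minus_one_pos: "0 < (2::real) ^ Suc m - 1"
  by (simp del: power_Suc)

lemma two_power_Suc_minus_one_nonzero: "(2::real) ^ Suc m - 1 \<noteq> 0"
  using two_power_Suc_minus_one_pos[of m] by linarith

lemma two_power_minus_one_pos: "0 < m \<Longrightarrow> 0 < (2::real) ^ m - 1"
  by simp

lemma qfact_0 [simp]: "qfact 0 = 1"
  by (simp add: qfact_def)

lemma qfact_Suc: "qfact (Suc m) = qfact m * (2 ^ Suc m - 1)"
  by (simp add: qfact_def prod.nat_ivl_Suc')

lemma qfact_pos: "0 < qfact m"
  by (induction m) (simp_all add: qfact_def prod_pos del: power_Suc)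

lemma qbinom_pos: "0 < qbinom M L"
  by (simp add: qbinom_def qfact_pos)

lemma qbinom_Suc_Suc:
  "qbinom (Suc M) (Suc L) * (2 ^ Suc L - 1) = qbinom M L * (2 ^ Suc M - 1)"
  using two_power_Suc_minus_one_nonzero[of L]
  by (simp add: qbinom_def qfact_Suc del: power_Suc)

lemma qbinom_Suc_left:
  assumes "L \<le> M"
  shows "qbinom (Suc M) L * (2 ^ (Suc M - L) - 1) = qbinom M L * (2 ^ Suc M - 1)"
proof -
  have "Suc M - L = Suc (M - L)" using assms by simp
  then show ?thesis
    using two_power_Suc_minus_one_nonzero[of "M - L"]
    by (simp add: qbinom_def qfact_Suc del: power_Suc)
qed

lemma qbinom_Suc_right:
  assumes "L < M"
  shows "qbinom M (Suc L) * (2 ^ Suc L - 1) = qbinom M L * (2 ^ (M - L) - 1)"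
proof -
  have "M - L = Suc (M - Suc L)" using assms by simp
  then show ?thesis
    using two_power_Suc_minus_one_nonzero[of L] two_power_Suc_minus_one_nonzero[of "M - Suc L"]
    by (simp add: qbinom_def qfact_Suc del: power_Suc)
qed

lemma qbin_of_nat:
  assumes "L \<le> M"
  shows "qbin (int M) (int L) = qbinom M L"
  using assms
proof (induction L)
  case 0
  then show ?case using qfact_pos[of M] by (simp add: qbin_def qbinom_def)
next
  case (Suc L)
  have "(2::real) powi (int M - int (Suc L) + 1) = 2 ^ (M - L)"
    using Suc.prems by (simp add: power_int_of_nat[symmetric] of_nat_diff)
  then have "qbin (int M) (int (Suc L)) = qbin (int M) (int L) * (2 ^ (M - L) - 1) / (2 ^ Suc L - 1)"
    unfolding qbin_def nat_int by (simp add: prod.nat_ivl_Suc' del: power_Suc of_nat_Suc)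
  also have "\<dots> = qbinom M (Suc L) * (2 ^ Suc L - 1) / (2 ^ Suc L - 1)"
    using Suc by (simp add: qbinom_Suc_right del: power_Suc)
  also have "\<dots> = qbinom M (Suc L)"
    using two_power_Suc_minus_one_nonzero by (rule nonzero_mult_div_cancel_right)
  finally show ?case .
qed

lemma Suc_choose_two: "Suc m choose 2 = (m choose 2) + m"
  by (simp add: numeral_2_eq_2)

definition G_term :: "nat \<Rightarrow> nat \<Rightarrow> nat \<Rightarrow> nat \<Rightarrow> nat \<Rightarrow> real" where
  "G_term n d j i h = 2 ^ (j * (j + h - i) + ((i - h) choose 2))
     * qbinom i h * qbinom (d - h) j * qbinom (n - d - i + h) (n - d - j)"

lemma G_term_pos: "0 < G_term n d j i h"
  by (simp add: G_term_def qbinom_pos)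

lemma G_term_Suc_h:
  assumes "h < i" "i \<le> h + j" "h + j < d" "d + d \<le> n"
  shows "G_term n d j i (Suc h) * ((2 ^ Suc h - 1) * (2 ^ (d - h) - 1) * (2 ^ (Suc h + j - i) - 1))
    = G_term n d j i h * (2 ^ (Suc h + j - i) * (2 ^ (i - h) - 1) * (2 ^ (d - h - j) - 1)
        * (2 ^ Suc (n - d - i + h) - 1))"
proof -
  have "(i - h) choose 2 = ((i - Suc h) choose 2) + (i - Suc h)"
    using Suc_choose_two[of "i - Suc h"] by (simp only: Suc_diff_Suc[OF assms(1)])
  then have "j * (j + Suc h - i) + ((i - Suc h) choose 2)
      = j * (j + h - i) + ((i - h) choose 2) + (Suc h + j - i)"
    using assms(1,2) by (simp add: Suc_diff_le)
  then have pow: "(2::real) ^ (j * (j + Suc h - i) + ((i - Suc h) choose 2))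
      = 2 ^ (j * (j + h - i) + ((i - h) choose 2)) * 2 ^ (Suc h + j - i)"
    by (simp add: power_add)
  have ratio_i: "qbinom i (Suc h) * (2 ^ Suc h - 1) = qbinom i h * (2 ^ (i - h) - 1)"
    using assms(1) by (rule qbinom_Suc_right)
  have ratio_d: "qbinom (d - Suc h) j * (2 ^ (d - h) - 1) = qbinom (d - h) j * (2 ^ (d - h - j) - 1)"
    using qbinom_Suc_left[of j "d - Suc h"] assms by (simp add: Suc_diff_Suc)
  have ratio_n: "qbinom (n - d - i + Suc h) (n - d - j) * (2 ^ (Suc h + j - i) - 1)
      = qbinom (n - d - i + h) (n - d - j) * (2 ^ Suc (n - d - i + h) - 1)"
  proof -
    have "n - d - j \<le> n - d - i + h" "Suc (n - d - i + h) - (n - d - j) = Suc h + j - i"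
      using assms by (linarith, simp add: Suc_diff_le)
    then show ?thesis
      using qbinom_Suc_left[of "n - d - j" "n - d - i + h"] by (simp only: add_Suc_right)
  qed
  have "G_term n d j i (Suc h) * ((2 ^ Suc h - 1) * (2 ^ (d - h) - 1) * (2 ^ (Suc h + j - i) - 1))
    = 2 ^ (j * (j + h - i) + ((i - h) choose 2)) * 2 ^ (Suc h + j - i)
      * (qbinom i (Suc h) * (2 ^ Suc h - 1)) * (qbinom (d - Suc h) j * (2 ^ (d - h) - 1))
      * (qbinom (n - d - i + Suc h) (n - d - j) * (2 ^ (Suc h + j - i) - 1))"
    unfolding G_term_def pow by (simp only: mult_ac)
  also have "\<dots> = G_term n d j i h * (2 ^ (Suc h + j - i) * (2 ^ (i - h) - 1) * (2 ^ (d - h - j) - 1)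
        * (2 ^ Suc (n - d - i + h) - 1))"
    unfolding ratio_i ratio_d ratio_n G_term_def by (simp only: mult_ac)
  finally show ?thesis .
qed

lemma G_term_Suc_i:
  assumes "h \<le> i" "Suc i \<le> h + j" "h + j \<le> d" "d + d \<le> n"
  shows "G_term n d j (Suc i) h * (2 ^ j * (2 ^ (Suc i - h) - 1) * (2 ^ (n - d - i + h) - 1))
    = G_term n d j i h * (2 ^ (i - h) * (2 ^ Suc i - 1) * (2 ^ (h + j - i) - 1))"
proof -
  have "(Suc i - h) choose 2 = ((i - h) choose 2) + (i - h)"
    by (simp add: Suc_diff_le[OF assms(1)] Suc_choose_two)
  moreover have "j * (j + h - i) = j * (j + h - Suc i) + j"
    using assms(2) by (simp add: Suc_diff_Suc[symmetric])
  ultimately have "j * (j + h - Suc i) + ((Suc i - h) choose 2) + j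
      = j * (j + h - i) + ((i - h) choose 2) + (i - h)"
    by linarith
  then have pow: "(2::real) ^ (j * (j + h - Suc i) + ((Suc i - h) choose 2)) * 2 ^ j
      = 2 ^ (j * (j + h - i) + ((i - h) choose 2)) * 2 ^ (i - h)"
    by (simp add: power_add[symmetric])
  have ratio_i: "qbinom (Suc i) h * (2 ^ (Suc i - h) - 1) = qbinom i h * (2 ^ Suc i - 1)"
    using assms(1) by (rule qbinom_Suc_left)
  have ratio_n: "qbinom (n - d - Suc i + h) (n - d - j) * (2 ^ (n - d - i + h) - 1)
      = qbinom (n - d - i + h) (n - d - j) * (2 ^ (h + j - i) - 1)"
  proof -
    have "n - d - j \<le> n - d - Suc i + h" "Suc (n - d - Suc i + h) = n - d - i + h"
      "n - d - i + h - (n - d - j) = h + j - i"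
      using assms by linarith+
    then show ?thesis
      using qbinom_Suc_left[of "n - d - j" "n - d - Suc i + h"] by (simp only:)
  qed
  have "G_term n d j (Suc i) h * (2 ^ j * (2 ^ (Suc i - h) - 1) * (2 ^ (n - d - i + h) - 1))
    = 2 ^ (j * (j + h - Suc i) + ((Suc i - h) choose 2)) * 2 ^ j
      * (qbinom (Suc i) h * (2 ^ (Suc i - h) - 1)) * qbinom (d - h) j
      * (qbinom (n - d - Suc i + h) (n - d - j) * (2 ^ (n - d - i + h) - 1))"
    unfolding G_term_def by (simp only: mult_ac)
  also have "\<dots> = G_term n d j i h * (2 ^ (i - h) * (2 ^ Suc i - 1) * (2 ^ (h + j - i) - 1))"
    unfolding pow ratio_i ratio_n G_term_def by (simp only: mult_ac)
  finally show ?thesis .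
qed

lemma G_term_Suc_Suc:
  assumes "h \<le> i" "Suc h + j \<le> d" "Suc i \<le> d" "d + d \<le> n"
  shows "G_term n d j (Suc i) (Suc h) * ((2 ^ Suc h - 1) * (2 ^ (d - h) - 1))
    = G_term n d j i h * ((2 ^ Suc i - 1) * (2 ^ (d - h - j) - 1))"
proof -
  have ratio_d: "qbinom (d - Suc h) j * (2 ^ (d - h) - 1) = qbinom (d - h) j * (2 ^ (d - h - j) - 1)"
    using qbinom_Suc_left[of j "d - Suc h"] assms by (simp add: Suc_diff_Suc)
  have "n - d - Suc i + Suc h = n - d - i + h"
    using assms by linarith
  then have "G_term n d j (Suc i) (Suc h) * ((2 ^ Suc h - 1) * (2 ^ (d - h) - 1))
    = 2 ^ (j * (j + h - i) + ((i - h) choose 2))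
      * (qbinom (Suc i) (Suc h) * (2 ^ Suc h - 1)) * (qbinom (d - Suc h) j * (2 ^ (d - h) - 1))
      * qbinom (n - d - i + h) (n - d - j)"
    unfolding G_term_def by (simp only: mult_ac diff_Suc_Suc add_Suc_right)
  also have "\<dots> = G_term n d j i h * ((2 ^ Suc i - 1) * (2 ^ (d - h - j) - 1))"
    unfolding qbinom_Suc_Suc ratio_d G_term_def by (simp only: mult_ac)
  finally show ?thesis .
qed

lemma int_choose_two: "int k * (int k - 1) div 2 = int (k choose 2)"
proof (cases k)
  case (Suc m)
  then have "int k - 1 = int (k - 1)" by simp
  then show ?thesis by (simp only: choose_two zdiv_int of_nat_mult of_nat_numeral)
qed simp

lemma G_of_nat_eq_sum:
  assumes "i \<le> d" "j \<le> d" "d + d \<le> n"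
  shows "G (int n) (int d) (int j) (int i)
    = (\<Sum>h = i - j..min i (d - j). (-1) ^ (i - h) * G_term n d j i h)"
proof -
  have range: "{max 0 (int i - int j) .. min (int i) (int d - int j)} = int ` {i - j..min i (d - j)}"
    using assms by (simp add: image_int_atLeastAtMost max_def of_nat_diff)
  have summand: "(-1) ^ nat (int i - int h)
      * (2::real) powi (int j * (int j - int i + int h) + (int i - int h) * (int i - int h - 1) div 2)
      * qbin (int i) (int h) * qbin (int d - int h) (int j)
      * qbin (int n - int d - int i + int h) (int n - int d - int j)
    = (-1) ^ (i - h) * G_term n d j i h" if "h \<in> {i - j..min i (d - j)}" for h
  proof -
    from that have h: "i - j \<le> h" "h \<le> i" "h \<le> d - j" by auto
    have diffs: "int i - int h = int (i - h)" "int d - int h = int (d - h)"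
      "int n - int d - int i + int h = int (n - d - i + h)" "int n - int d - int j = int (n - d - j)"
      "int j - int i + int h = int (j + h - i)"
      using h assms by simp_all
    have qbins: "qbin (int i) (int h) = qbinom i h" "qbin (int (d - h)) (int j) = qbinom (d - h) j"
      "qbin (int (n - d - i + h)) (int (n - d - j)) = qbinom (n - d - i + h) (n - d - j)"
      using h assms by (simp_all only: qbin_of_nat)
    have exponent: "int j * int (j + h - i) + int (i - h) * (int (i - h) - 1) div 2
        = int (j * (j + h - i) + ((i - h) choose 2))"
      unfolding int_choose_two by simp
    show ?thesis
      unfolding diffs qbins exponent power_int_of_nat nat_int G_term_def by simp
  qed
  show ?thesis
    unfolding G_def range by (subst sum.reindex) (auto intro!: sum.cong simp: summand)
qed

lemma alternating_sum_Suc: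
  fixes f :: "nat \<Rightarrow> 'a::ring_1"
  assumes "lo \<le> m"
  shows "(\<Sum>h = lo..Suc m. (-1) ^ (Suc m - h) * f h)
    = f (Suc m) - (\<Sum>h = lo..m. (-1) ^ (m - h) * f h)"
proof -
  have "(\<Sum>h = lo..m. (-1) ^ (Suc m - h) * f h) = (\<Sum>h = lo..m. - ((-1) ^ (m - h) * f h))"
    by (rule sum.cong) (simp_all add: Suc_diff_le)
  then show ?thesis
    using assms by (simp add: sum.cl_ivl_Suc sum_negf)
qed

lemma alternating_sum_bounds:
  fixes f :: "nat \<Rightarrow> 'a::linordered_idom"
  assumes "lo \<le> m" "0 \<le> f lo" "\<And>h. lo \<le> h \<Longrightarrow> h < m \<Longrightarrow> f h \<le> f (Suc h)"
  shows "0 \<le> (\<Sum>h = lo..m. (-1) ^ (m - h) * f h)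
    \<and> (\<Sum>h = lo..m. (-1) ^ (m - h) * f h) \<le> f m"
  using assms
proof (induction m)
  case (Suc m)
  show ?case
  proof (cases "lo = Suc m")
    case False
    then have "lo \<le> m" using Suc.prems(1) by simp
    then have "0 \<le> (\<Sum>h = lo..m. (-1) ^ (m - h) * f h)
        \<and> (\<Sum>h = lo..m. (-1) ^ (m - h) * f h) \<le> f m"
      using Suc by simp
    moreover have "f m \<le> f (Suc m)" using Suc.prems(3) \<open>lo \<le> m\<close> by simp
    ultimately show ?thesis
      using alternating_sum_Suc[OF \<open>lo \<le> m\<close>, of f] by linarith
  qed (use Suc.prems in simp)
qed simp

lemma alternating_sum_lower_bound:
  fixes f :: "nat \<Rightarrow> 'a::linordered_idom"
  assumes "lo < m" "0 \<le> f lo" "\<And>h. lo \<le> h \<Longrightarrow> h < m \<Longrightarrow> f h \<le> f (Suc h)"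
  shows "f m - f (m - 1) \<le> (\<Sum>h = lo..m. (-1) ^ (m - h) * f h)"
proof -
  obtain k where m: "m = Suc k" and "lo \<le> k" using assms(1) by (cases m) auto
  then have "(\<Sum>h = lo..k. (-1) ^ (k - h) * f h) \<le> f k"
    using alternating_sum_bounds[of lo k f] assms by simp
  then show ?thesis
    unfolding m using alternating_sum_Suc[OF \<open>lo \<le> k\<close>, of f] by simp
qed

lemma le_of_scaled_eq:
  fixes x y a b :: "'a::linordered_idom"
  assumes "y * a = x * b" "0 < a" "a \<le> b" "0 \<le> x"
  shows "x \<le> y"
proof -
  have "x * a \<le> y * a"
    using assms by (simp add: mult_left_mono)
  then show ?thesis
    using assms(2) by simp
qed

lemma less_of_scaled_eq:
  fixes x y a b :: "'a::linordered_idom"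
  assumes "y * a = x * b" "0 < a" "b < a" "0 < x"
  shows "y < x"
proof -
  have "y * a < x * a"
    using assms by (simp add: mult_strict_left_mono)
  then show ?thesis
    using assms(2) by simp
qed

lemma add_less_of_scaled_eqs:
  fixes x y z a b c e :: "'a::linordered_idom"
  assumes "x * a = y * b" "y * c = z * e" "0 < a" "0 < e" "0 < y" "b * e + a * c < a * e"
  shows "x + z < y"
proof -
  have "(x + z) * (a * e) = y * (b * e + a * c)"
    using assms(1,2) by (simp add: algebra_simps)
  also have "\<dots> < y * (a * e)"
    using assms(6,5) by (rule mult_strict_left_mono)
  finally show ?thesis
    using assms(3,4) by (simp add: mult_less_cancel_right)
qed

lemma G_term_mono_poly:
  fixes K E F H S :: real
  assumes "1 \<le> K" "1 \<le> E" "1 \<le> F" "1 \<le> H" "1 \<le> S"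
  shows "(2*H - 1) * (4*K*E*F - 1) * (2*E - 1) < 2*E * (2*K - 1) * (2*F - 1) * (8*H*E*F*S - 1)"
proof -
  have "(2*H - 1) * (4*K*E*F - 1) * (2*E - 1) < (2*H - 1) * (4*K*E*F) * (2*E - 1)"
    using assms by simp
  also have "\<dots> = 2*E*(K*F) * (2 * (2*H - 1) * (2*E - 1))"
    by (simp add: algebra_simps)
  also have "\<dots> \<le> 2*E*(K*F) * (8*H*E*F*S - 1)"
  proof (rule mult_left_mono)
    have "8*H*E*F*S - 1 - 2 * (2*H - 1) * (2*E - 1) = 8*H*E*(F*S - 1) + (4*H + 4*E - 3)"
      by (simp add: algebra_simps)
    moreover have "0 \<le> 8*H*E*(F*S - 1)"
      using assms mult_ge1_I[of F S] by simp
    ultimately show "2 * (2*H - 1) * (2*E - 1) \<le> 8*H*E*F*S - 1"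
      using assms by linarith
  qed (use assms in simp)
  also have "\<dots> = 2*E * (8*H*E*F*S - 1) * (K*F)"
    by (simp add: mult_ac)
  also have "\<dots> \<le> 2*E * (8*H*E*F*S - 1) * ((2*K - 1) * (2*F - 1))"
  proof -
    have "K*F \<le> (2*K - 1) * (2*F - 1)"
      using assms mult_nonneg_nonneg[of "K-1" "F-1"] by (simp add: algebra_simps)
    moreover have "0 \<le> 2*E * (8*H*E*F*S - 1)"
      using assms mult_ge1_I[of "H*E" "F*S"] mult_ge1_I[of H E] mult_ge1_I[of F S] by simp
    ultimately show ?thesis by (rule mult_left_mono)
  qed
  finally show ?thesis by (simp add: algebra_simps)
qed

lemma G_term_mono:
  assumes "h < i" "i \<le> h + j" "h + j < d" "d + d < n"
  shows "G_term n d j i h \<le> G_term n d j i (Suc h)"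
proof -
  define k e f s where "k = i - Suc h" and "e = h + j - i" and "f = d - Suc (h + j)"
    and "s = n - Suc (d + d)"
  have params: "i = h + Suc k" "j = Suc k + e" "d = h + k + e + f + 2" "n = d + d + Suc s"
    using assms unfolding k_def e_def f_def s_def by linarith+
  have less: "(2 ^ Suc h - 1) * (2 ^ (d - h) - 1) * (2 ^ (Suc h + j - i) - 1)
      < (2::real) ^ (Suc h + j - i) * (2 ^ (i - h) - 1) * (2 ^ (d - h - j) - 1)
        * (2 ^ Suc (n - d - i + h) - 1)"
  proof -
    have "Suc h + j - i = Suc e" "i - h = Suc k" "d - h = k + e + f + 2" "d - h - j = Suc f"
      "Suc (n - d - i + h) = h + e + f + s + 3"
      using params by simp_all
    then show ?thesis
      using G_term_mono_poly[of "2 ^ k" "2 ^ e" "2 ^ f" "2 ^ h" "2 ^ s"]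
      by (simp add: power_add mult_ac)
  qed
  have pos: "0 < (2 ^ Suc h - 1) * (2 ^ (d - h) - 1) * ((2::real) ^ (Suc h + j - i) - 1)"
    using assms by (intro mult_pos_pos two_power_minus_one_pos) simp_all
  have "d + d \<le> n" using assms(4) by simp
  with assms(1-3) have ratio: "G_term n d j i (Suc h)
      * ((2 ^ Suc h - 1) * (2 ^ (d - h) - 1) * (2 ^ (Suc h + j - i) - 1))
    = G_term n d j i h * (2 ^ (Suc h + j - i) * (2 ^ (i - h) - 1) * (2 ^ (d - h - j) - 1)
        * (2 ^ Suc (n - d - i + h) - 1))"
    by (rule G_term_Suc_h)
  show ?thesis
    using ratio pos less_imp_le[OF less] less_imp_le[OF G_term_pos] by (rule le_of_scaled_eq)
qed

lemma abs_G_bounds: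
  assumes "i \<le> d" "j \<le> d" "d + d < n"
  defines "lo \<equiv> i - j" and "hi \<equiv> min i (d - j)"
  shows "\<bar>G (int n) (int d) (int j) (int i)\<bar> \<le> G_term n d j i hi"
    and "lo = hi \<Longrightarrow> \<bar>G (int n) (int d) (int j) (int i)\<bar> = G_term n d j i hi"
    and "lo < hi \<Longrightarrow>
      G_term n d j i hi - G_term n d j i (hi - 1) \<le> \<bar>G (int n) (int d) (int j) (int i)\<bar>"
proof -
  let ?S = "\<Sum>h = lo..hi. (-1) ^ (hi - h) * G_term n d j i h"
  have lo_hi: "lo \<le> hi" using assms by auto
  have mono: "G_term n d j i h \<le> G_term n d j i (Suc h)" if "lo \<le> h" "h < hi" for h
    using that assms by (intro G_term_mono) auto
  have nonneg: "0 \<le> G_term n d j i lo"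
    by (rule less_imp_le[OF G_term_pos])
  note bounds = alternating_sum_bounds[OF lo_hi nonneg mono]
  have "G (int n) (int d) (int j) (int i) = (\<Sum>h = lo..hi. (-1) ^ (i - h) * G_term n d j i h)"
    unfolding lo_def hi_def using assms by (intro G_of_nat_eq_sum) simp_all
  also have "\<dots> = (-1) ^ (i - hi) * ?S"
    unfolding sum_distrib_left
  proof (rule sum.cong)
    fix h assume "h \<in> {lo..hi}"
    then have "i - h = (i - hi) + (hi - h)" by (auto simp: hi_def)
    then show "(-1) ^ (i - h) * G_term n d j i h = (-1) ^ (i - hi) * ((-1) ^ (hi - h) * G_term n d j i h)"
      by (simp only: power_add mult.assoc)
  qed simp
  finally have abs_G: "\<bar>G (int n) (int d) (int j) (int i)\<bar> = ?S"
    using bounds by (simp add: abs_mult)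
  show "\<bar>G (int n) (int d) (int j) (int i)\<bar> \<le> G_term n d j i hi"
    using abs_G bounds by simp
  show "\<bar>G (int n) (int d) (int j) (int i)\<bar> = G_term n d j i hi" if "lo = hi"
    using abs_G that by simp
  show "G_term n d j i hi - G_term n d j i (hi - 1) \<le> \<bar>G (int n) (int d) (int j) (int i)\<bar>"
    if "lo < hi"
    using abs_G alternating_sum_lower_bound[OF that nonneg mono] by simp
qed

lemma G_term_one_one_less:
  assumes "0 < j" "j < d" "d + d \<le> n"
  shows "G_term n d j 1 1 < G_term n d j 0 0"
proof -
  have "Suc 0 + j \<le> d" "Suc 0 \<le> d" using assms by simp_all
  from G_term_Suc_Suc[OF le0 this assms(3)]
  have ratio: "G_term n d j 1 1 * ((2 ^ 1 - 1) * (2 ^ d - 1))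
      = G_term n d j 0 0 * ((2 ^ 1 - 1) * (2 ^ (d - j) - 1))"
    by (simp only: diff_zero One_nat_def)
  have "(2::real) ^ (d - j) < 2 ^ d" using assms by simp
  then have "(2 ^ 1 - 1) * ((2::real) ^ (d - j) - 1) < (2 ^ 1 - 1) * (2 ^ d - 1)" by simp
  moreover have "0 < (2 ^ 1 - 1) * ((2::real) ^ d - 1)" using assms by simp
  ultimately show ?thesis
    using ratio G_term_pos by (blast intro: less_of_scaled_eq)
qed

lemma G_term_Suc_zero_less:
  assumes "i < d" "d + d \<le> n"
  shows "G_term n d d (Suc i) 0 < G_term n d d i 0"
proof -
  have "Suc i \<le> 0 + d" "0 + d \<le> d" using assms by simp_all
  from G_term_Suc_i[OF le0 this assms(2)]
  have ratio: "G_term n d d (Suc i) 0 * (2 ^ d * (2 ^ Suc i - 1) * (2 ^ (n - d - i) - 1))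
      = G_term n d d i 0 * (2 ^ i * (2 ^ Suc i - 1) * (2 ^ (d - i) - 1))"
    by (simp only: diff_zero add_0 add_0_right)
  have "(2::real) ^ i * (2 ^ (d - i) - 1) < 2 ^ i * 2 ^ (d - i)" by simp
  also have "\<dots> = 2 ^ d" using assms by (simp flip: power_add)
  also have "\<dots> \<le> 2 ^ d * (2 ^ (n - d - i) - 1)"
  proof -
    have "(2::real) ^ 1 \<le> 2 ^ (n - d - i)" using assms by (intro power_increasing) simp_all
    then show ?thesis by simp
  qed
  finally have "(2::real) ^ i * (2 ^ (d - i) - 1) < 2 ^ d * (2 ^ (n - d - i) - 1)" .
  then have "2 ^ i * (2 ^ Suc i - 1) * ((2::real) ^ (d - i) - 1)
      < 2 ^ d * (2 ^ Suc i - 1) * (2 ^ (n - d - i) - 1)"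
    using two_power_Suc_minus_one_pos[of i] by (simp add: mult.commute mult.left_commute)
  moreover have "0 < 2 ^ d * (2 ^ Suc i - 1) * ((2::real) ^ (n - d - i) - 1)"
    using assms by (intro mult_pos_pos two_power_minus_one_pos) simp_all
  ultimately show ?thesis
    using ratio G_term_pos by (blast intro: less_of_scaled_eq)
qed

lemma G_term_diag_poly:
  fixes G J P S :: real
  assumes "1 \<le> G" "1 \<le> J" "1 \<le> P" "1 \<le> S"
  shows "(2*P - 1) * (2*J * (4*P - 1) * (16*G*J*P*S - 1))
      + (4*J*P - 1) * ((2*G - 1) * (8*J*P - 1) * (2*J - 1))
    < (4*J*P - 1) * (2*J * (4*P - 1) * (16*G*J*P*S - 1))"
proof -
  have JP: "1 \<le> J*P" "1 \<le> G*J*P*S" using assms by (simp_all add: mult_ge1_I)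
  have "(4*J*P - 1) * (2*G - 1) * (8*J*P - 1) < 4*J*P * (2*G) * (8*J*P)"
    using assms JP by (intro mult_strict_mono) auto
  also have "\<dots> = 4*J*P * 2 * (8*G*J*P)" by (simp add: algebra_simps)
  also have "\<dots> \<le> 4*J*P * (4*P - 1) * (16*G*J*P*S - 1)"
  proof -
    have "G*J*P \<le> G*J*P*S" "1 \<le> G*J*P" using assms by (simp_all add: mult_ge1_I)
    then have "8*G*J*P \<le> 16*G*J*P*S - 1" by linarith
    then show ?thesis using assms JP by (intro mult_mono) auto
  qed
  finally have "(4*J*P - 1) * (2*G - 1) * (8*J*P - 1) * (2*J - 1)
      < 4*J*P * (4*P - 1) * (16*G*J*P*S - 1) * (2*J - 1)"
    using assms by (intro mult_strict_right_mono) auto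
  then show ?thesis by (simp add: algebra_simps)
qed

lemma G_term_diag_step_less:
  assumes "0 < i" "0 < j" "i + j < d" "d + d < n"
  shows "G_term n d j (Suc i) (Suc i) + G_term n d j i (i - 1) < G_term n d j i i"
proof -
  define g b p s where "g = i - 1" and "b = j - 1" and "p = d - Suc (i + j)" and "s = n - Suc (d + d)"
  have params: "i = Suc g" "j = Suc b" "d = g + b + p + 3" "n = d + d + Suc s"
    using assms unfolding g_def b_def p_def s_def by linarith+
  let ?u = "(2::real) ^ Suc i - 1"
  let ?a = "(2::real) ^ (d - i) - 1" and ?b = "(2::real) ^ (d - i - j) - 1"
  let ?c = "((2::real) ^ i - 1) * (2 ^ (d - g) - 1) * (2 ^ j - 1)"
  let ?e = "(2::real) ^ j * (2 ^ (d - g - j) - 1) * (2 ^ (n - d) - 1)"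
  have "Suc i + j \<le> d" "Suc i \<le> d" "d + d \<le> n" using assms by simp_all
  from G_term_Suc_Suc[OF le_refl this]
  have diag: "G_term n d j (Suc i) (Suc i) * (?u * ?a) = G_term n d j i i * (?u * ?b)" .
  have "g < i" "i \<le> g + j" "g + j < d" using params by simp_all
  from G_term_Suc_h[OF this \<open>d + d \<le> n\<close>]
  have step: "G_term n d j i i * ?c = G_term n d j i (i - 1) * ?e"
    unfolding g_def using params by simp
  have "?b * ?e + ?a * ?c < ?a * ?e"
  proof -
    have "d - i - j = Suc p" "d - i = b + p + 2" "d - g = b + p + 3" "d - g - j = p + 2"
      "n - d = g + b + p + s + 4"
      using params by simp_all
    then show ?thesis
      using G_term_diag_poly[of "2 ^ g" "2 ^ b" "2 ^ p" "2 ^ s"] params(1,2)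
      by (simp add: power_add mult_ac)
  qed
  then have "?u * (?b * ?e + ?a * ?c) < ?u * (?a * ?e)"
    using two_power_Suc_minus_one_pos[of i] by (rule mult_strict_left_mono)
  then have "(?u * ?b) * ?e + (?u * ?a) * ?c < (?u * ?a) * ?e"
    by (simp only: distrib_left mult.assoc)
  moreover have "0 < ?u * ?a" "0 < ?e"
    using assms params by (intro mult_pos_pos two_power_minus_one_pos zero_less_power; simp)+
  ultimately show ?thesis
    using diag step G_term_pos by (blast intro: add_less_of_scaled_eqs)
qed

lemma G_term_edge_poly:
  fixes G A E S :: real
  assumes "1 \<le> G" "1 \<le> A" "1 \<le> E" "1 \<le> S"
  shows "(4*G*A - 1) * (2*E - 1) + (2*G - 1) * (4*A*E - 1) * (2*E - 1) < 2*E * (2*A - 1) * (8*G*E*S - 1)"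
proof -
  have "(4*G*A - 1) * (2*E - 1) + (2*G - 1) * (4*A*E - 1) * (2*E - 1)
      = 2*E*A*(8*G*E - 1) - (2*A*E*(4*E - 3) + 2*G*(2*E - 1) + 4*G*A)"
    by (simp add: algebra_simps)
  also have "\<dots> < 2*E*A*(8*G*E - 1)"
  proof -
    have "0 < 2*A*E*(4*E - 3)" "0 \<le> 2*G*(2*E - 1)" "0 < 4*G*A"
      using assms by simp_all
    then show ?thesis by linarith
  qed
  also have "\<dots> \<le> 2*E * (2*A - 1) * (8*G*E*S - 1)"
    using assms by (intro mult_mono) (auto simp: mult_ge1_I)
  finally show ?thesis .
qed

lemma G_term_edge_step_less:
  assumes "j < d" "d \<le> i + j" "i < d" "d + d < n"
  shows "G_term n d j (Suc i) (d - j) + G_term n d j i (d - j - 1) < G_term n d j i (d - j)"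
proof -
  define g a e s where "g = d - Suc j" and "a = i + j - d" and "e = d - Suc i" and "s = n - Suc (d + d)"
  have params: "d - j = Suc g" "i = Suc g + a" "j = Suc a + e" "n = d + d + Suc s"
    using assms unfolding g_def a_def e_def s_def by linarith+
  let ?A = "(2::real) ^ j * (2 ^ (Suc i - Suc g) - 1) * (2 ^ (n - d - i + Suc g) - 1)"
  let ?B = "(2::real) ^ (i - Suc g) * (2 ^ Suc i - 1) * (2 ^ (Suc g + j - i) - 1)"
  let ?C = "((2::real) ^ Suc g - 1) * (2 ^ (d - g) - 1) * (2 ^ (Suc g + j - i) - 1)"
  let ?E = "(2::real) ^ (Suc g + j - i) * (2 ^ (i - g) - 1) * (2 ^ (d - g - j) - 1)
    * (2 ^ Suc (n - d - i + g) - 1)"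
  let ?W = "((2::real) ^ Suc i - 1) * (2 ^ (Suc g + j - i) - 1)"
  have "Suc g \<le> i" "Suc i \<le> Suc g + j" "Suc g + j \<le> d" "d + d \<le> n"
    using assms params by simp_all
  note Suc_i = G_term_Suc_i[OF this]
  have "g < i" "i \<le> g + j" "g + j < d" using assms params by simp_all
  note Suc_h = G_term_Suc_h[OF this \<open>d + d \<le> n\<close>]
  have idx: "Suc i - Suc g = Suc a" "i - Suc g = a" "Suc g + j - i = Suc e" "i - g = Suc a" "d - g - j = 1"
    "d - g = a + e + 2" "Suc (n - d - i + g) = g + e + s + 3" "n - d - i + Suc g = g + e + s + 3"
    using params by simp_all
  (* After cancelling the common factor ?A, the two ratio identities leave ?W + ?C < ?E. *)
  have factor: "?B * ?E = ?A * ?W"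
    unfolding idx by (simp add: params(3) power_add mult_ac)
  have less: "?W + ?C < ?E"
    unfolding idx using G_term_edge_poly[of "2 ^ g" "2 ^ a" "2 ^ e" "2 ^ s"]
    by (simp add: params(2,3) power_add mult_ac)
  have pos: "0 < ?A" "0 < ?E"
    using params by (intro mult_pos_pos two_power_minus_one_pos zero_less_power; simp)+
  have "?B * ?E + ?A * ?C = ?A * (?W + ?C)"
    by (simp only: factor distrib_left)
  also have "\<dots> < ?A * ?E"
    using less pos(1) by (rule mult_strict_left_mono)
  finally have "?B * ?E + ?A * ?C < ?A * ?E" .
  then show ?thesis
    unfolding params(1) diff_Suc_1 using Suc_i Suc_h pos G_term_pos
    by (blast intro: add_less_of_scaled_eqs)
qed

lemma abs_G_Suc_less_if_add_less:
  assumes "0 < j" "i + j < d" "d + d < n"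
  shows "\<bar>G (int n) (int d) (int j) (int (Suc i))\<bar> < \<bar>G (int n) (int d) (int j) (int i)\<bar>"
proof -
  have hi: "min i (d - j) = i" "min (Suc i) (d - j) = Suc i" using assms by auto
  have upper: "\<bar>G (int n) (int d) (int j) (int (Suc i))\<bar> \<le> G_term n d j (Suc i) (Suc i)"
    using abs_G_bounds(1)[of "Suc i" d j n] assms unfolding hi by simp
  show ?thesis
  proof (cases "i = 0")
    case True
    then have "\<bar>G (int n) (int d) (int j) (int i)\<bar> = G_term n d j 0 0"
      using abs_G_bounds(2)[of i d j n] assms unfolding hi by simp
    with upper True show ?thesis
      using G_term_one_one_less[of j d n] assms by simp
  next
    case False
    then have "G_term n d j i i - G_term n d j i (i - 1) \<le> \<bar>G (int n) (int d) (int j) (int i)\<bar>"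
      using abs_G_bounds(3)[of i d j n] assms unfolding hi by simp
    with upper show ?thesis
      using G_term_diag_step_less[of i j d n] assms False by simp
  qed
qed

lemma abs_G_Suc_less_if_le_add:
  assumes "0 < j" "j \<le> d" "d \<le> i + j" "i < d" "d + d < n"
  shows "\<bar>G (int n) (int d) (int j) (int (Suc i))\<bar> < \<bar>G (int n) (int d) (int j) (int i)\<bar>"
proof -
  have hi: "min i (d - j) = d - j" "min (Suc i) (d - j) = d - j" using assms by auto
  have upper: "\<bar>G (int n) (int d) (int j) (int (Suc i))\<bar> \<le> G_term n d j (Suc i) (d - j)"
    using abs_G_bounds(1)[of "Suc i" d j n] assms unfolding hi by simp
  show ?thesis
  proof (cases "j = d")
    case True
    then have "\<bar>G (int n) (int d) (int j) (int i)\<bar> = G_term n d d i 0"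
      using abs_G_bounds(2)[of i d j n] assms unfolding hi by simp
    with upper True show ?thesis
      using G_term_Suc_zero_less[of i d n] assms by simp
  next
    case False
    then have "G_term n d j i (d - j) - G_term n d j i (d - j - 1) \<le> \<bar>G (int n) (int d) (int j) (int i)\<bar>"
      using abs_G_bounds(3)[of i d j n] assms unfolding hi by simp
    with upper show ?thesis
      using G_term_edge_step_less[of j d i n] assms False by simp
  qed
qed

theorem theorem3p7:
  fixes n d i j :: int
  assumes "d \<ge> 1" and "n \<ge> 2 * d + 1"
    and "0 \<le> i" and "i \<le> d - 1" and "1 \<le> j" and "j \<le> d"
  shows "\<bar>G n d j (i + 1)\<bar> < \<bar>G n d j i\<bar>"
proof -
  define N D I J where "N = nat n" and "D = nat d" and "I = nat i" and "J = nat j"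
  have Suc_I: "i + 1 = int (Suc I)"
    using assms unfolding I_def by simp
  have as_nat: "n = int N" "d = int D" "i = int I" "j = int J"
    using assms unfolding N_def D_def I_def J_def by simp_all
  have "0 < J" "J \<le> D" "I < D" "D + D < N"
    using assms unfolding as_nat by simp_all
  then have "\<bar>G (int N) (int D) (int J) (int (Suc I))\<bar> < \<bar>G (int N) (int D) (int J) (int I)\<bar>"
    using abs_G_Suc_less_if_add_less[of J I D N] abs_G_Suc_less_if_le_add[of J D I N]
    by (cases "I + J < D") simp_all
  then show ?thesis
    unfolding Suc_I unfolding as_nat .
qed

end
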